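(* Let $\alpha\in(0,1)$ and $d\ge2$. There exists a continuous function $f:[0,\infty)\times\mathbb{R}^d\to\mathbb{R}^d$, globally Lipschitz in $x$, such that for the system ${}^{C}D^\alpha_{0+}x(t)=f(t,x(t))$, $t\ge0$, there is no two-parameter flow $(\phi_{s,t})_{s,t\ge0}$ in $\mathbb{R}^d$ whose maps $\phi_{0,t}$ coincide with the evolution mappings of the system for all $t\ge0$.
   Context: ${}^{C}D^\alpha_{0+}$ is the Caputo fractional derivative of order $\alpha$, applied componentwise; a solution is a continuous $x:[0,\infty)\to\mathbb{R}^d$ with $x(t)=x(0)+\frac{1}{\Gamma(\alpha)}\int_0^t(t-\tau)^{\alpha-1}f(\tau,x(\tau))\,d\tau$; under the Lipschitz condition each initial value gives a unique solution. The evolution mapping $\phi_{0,t}:\mathbb{R}^d\to\mathbb{R}^d$ sends $x_0$ to $x(t)$ where $x(\cdot)$ is the solution with $x(0)=x_0$. A two-parameter flow in $\mathbb{R}^d$ is a family $\phi_{s,t}:\mathbb{R}^d\to\mathbb{R}^d$, $s,t\ge0$, such that $(s,t,x)\mapsto\phi_{s,t}(x)$ is continuous, each $\phi_{s,t}$ is a homeomorphism of $\mathbb{R}^d$, and $\phi_{s,t}\circ\phi_{u,s}=\phi_{u,t}$ for all $u,s,t\ge0$. *)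

theory Defs
  imports "HOL-Analysis.Analysis"
begin

text \<open>Solution of the Caputo system  D^alpha x(t) = f(t, x(t)), t >= 0, in the sense of
  the equivalent Volterra integral equation
  x(t) = x(0) + 1/Gamma(alpha) * integral_0^t (t - tau)^(alpha-1) f(tau, x(tau)) dtau.\<close>
definition caputo_solution ::
  "real \<Rightarrow> (real \<Rightarrow> 'a::euclidean_space \<Rightarrow> 'a) \<Rightarrow> (real \<Rightarrow> 'a) \<Rightarrow> bool" where
  "caputo_solution \<alpha> f x \<longleftrightarrow>
     continuous_on {0..} x \<and>
     (\<forall>t\<ge>0. ((\<lambda>\<tau>. ((t - \<tau>) powr (\<alpha> - 1) / Gamma \<alpha>) *\<^sub>R f \<tau> (x \<tau>))
                 has_integral (x t - x 0)) {0..t})"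

definition evolution_map ::
  "real \<Rightarrow> (real \<Rightarrow> 'a::euclidean_space \<Rightarrow> 'a) \<Rightarrow> real \<Rightarrow> 'a \<Rightarrow> 'a" where
  "evolution_map \<alpha> f t x0 = (THE y. \<exists>x. caputo_solution \<alpha> f x \<and> x 0 = x0 \<and> x t = y)"

definition two_param_flow :: "(real \<Rightarrow> real \<Rightarrow> 'a::topological_space \<Rightarrow> 'a) \<Rightarrow> bool" where
  "two_param_flow \<phi> \<longleftrightarrow>
     continuous_on ({0..} \<times> {0..} \<times> UNIV) (\<lambda>(s, t, x). \<phi> s t x) \<and>
     (\<forall>s\<ge>0. \<forall>t\<ge>0. \<exists>g. homeomorphism UNIV UNIV (\<phi> s t) g) \<and>
     (\<forall>u\<ge>0. \<forall>s\<ge>0. \<forall>t\<ge>0. \<phi> s t \<circ> \<phi> u s = \<phi> u t)"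

end

theory Submission
  imports Defs
begin

text \<open>The field is odd in the state, so with every solution \<open>x\<close> also \<open>-x\<close> is a solution. It
  is built from two time windows: on \<open>[0,1]\<close> the \<open>i\<close>-coordinate drives the \<open>j\<close>-coordinate,
  on \<open>[1,3]\<close> the \<open>j\<close>-coordinate drives the \<open>i\<close>-coordinate, each through a saturation that
  equals \<open>1\<close> along the solution we follow. That solution is therefore an explicit fractional
  integral of the two time profiles, and because of the memory of the fractional integral the
  constants can be tuned so that it starts at a nonzero point and reaches \<open>0\<close> at time \<open>5\<close>.
  Then \<open>\<phi>\<^sub>0\<^sub>,\<^sub>5\<close> maps \<open>x\<^sub>0\<close> and \<open>-x\<^sub>0\<close> to \<open>0\<close> and cannot be a homeomorphism.\<close>

section \<open>The Riemann--Liouville kernel\<close>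

lemma has_integral_powr_kernel:
  fixes \<alpha> a b t :: real
  assumes "0 < \<alpha>" "a \<le> b" "b \<le> t"
  shows "((\<lambda>s. (t - s) powr (\<alpha> - 1)) has_integral ((t - a) powr \<alpha> - (t - b) powr \<alpha>) / \<alpha>) {a..b}"
proof -
  have "((\<lambda>s. (t - s) powr (\<alpha> - 1)) has_integral
          (\<lambda>s. - ((t - s) powr \<alpha>) / \<alpha>) b - (\<lambda>s. - ((t - s) powr \<alpha>) / \<alpha>) a) {a..b}"
  proof (rule fundamental_theorem_of_calculus_interior[OF assms(2)])
    show "continuous_on {a..b} (\<lambda>s. - ((t - s) powr \<alpha>) / \<alpha>)"
      using assms by (intro continuous_intros continuous_on_powr') auto
  next
    fix x assume "x \<in> {a<..<b}"
    then have "t - x > 0" using assms by auto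
    then show "((\<lambda>s. - ((t - s) powr \<alpha>) / \<alpha>) has_vector_derivative (t - x) powr (\<alpha> - 1)) (at x)"
      unfolding has_real_derivative_iff_has_vector_derivative[symmetric]
      using assms(1) by (auto intro!: derivative_eq_intros)
  qed
  then show ?thesis by (simp add: diff_divide_distrib)
qed

lemma integrable_powr_kernel_mult:
  fixes \<alpha> a b t :: real
  assumes "0 < \<alpha>" "a \<le> b" "b \<le> t" "continuous_on {a..b} h"
  shows "(\<lambda>s. (t - s) powr (\<alpha> - 1) * h s) integrable_on {a..b}"
proof -
  have "(\<lambda>s. (t - s) powr (\<alpha> - 1)) absolutely_integrable_on {a..b}"
    using has_integral_powr_kernel[OF assms(1-3)] by (intro nonnegative_absolutely_integrable_1) auto
  then have "(\<lambda>s. h s * (t - s) powr (\<alpha> - 1)) absolutely_integrable_on {a..b}"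
    by (intro absolutely_integrable_bounded_measurable_product_real
          continuous_imp_measurable_on_sets_lebesgue[OF assms(4)])
       (auto intro!: compact_imp_bounded compact_continuous_image assms(4))
  then show ?thesis
    by (simp add: absolutely_integrable_on_def mult.commute)
qed

definition rl_integral :: "real \<Rightarrow> (real \<Rightarrow> real) \<Rightarrow> real \<Rightarrow> real" where
  "rl_integral \<alpha> h t = integral {0..t} (\<lambda>s. (t - s) powr (\<alpha> - 1) * h s)"

lemma rl_integral_0 [simp]: "rl_integral \<alpha> h 0 = 0"
  by (simp add: rl_integral_def)

lemma has_integral_rl_integral:
  assumes "0 < \<alpha>" "0 \<le> t" "continuous_on {0..t} h"
  shows "((\<lambda>s. (t - s) powr (\<alpha> - 1) * h s) has_integral rl_integral \<alpha> h t) {0..t}"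
  unfolding rl_integral_def
  using integrable_powr_kernel_mult[OF assms(1,2) order_refl assms(3)] by (rule integrable_integral)

lemma abs_integral_mult_le:
  fixes g h :: "real \<Rightarrow> real"
  assumes g: "((\<lambda>s. \<bar>g s\<bar>) has_integral I) S" and gh: "(\<lambda>s. g s * h s) integrable_on S"
    and h: "\<And>s. s \<in> S \<Longrightarrow> \<bar>h s\<bar> \<le> M"
  shows "\<bar>integral S (\<lambda>s. g s * h s)\<bar> \<le> M * I"
proof -
  have "norm (integral S (\<lambda>s. g s * h s)) \<le> integral S (\<lambda>s. M * \<bar>g s\<bar>)"
  proof (rule integral_norm_bound_integral[OF gh])
    show "(\<lambda>s. M * \<bar>g s\<bar>) integrable_on S"
      using has_integral_mult_right[OF g] by blast
    fix s assume "s \<in> S"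
    then show "norm (g s * h s) \<le> M * \<bar>g s\<bar>"
      using h mult_left_mono[of "\<bar>h s\<bar>" M "\<bar>g s\<bar>"] by (simp add: abs_mult mult.commute)
  qed
  also have "\<dots> = M * I"
    using has_integral_mult_right[OF g] by (rule integral_unique)
  finally show ?thesis by simp
qed

text \<open>Splitting at \<open>t\<close>, the difference consists of the kernel increment on \<open>[0,t]\<close> and
  the new piece on \<open>[t,t']\<close>; each has kernel mass at most \<open>(t' - t)\<^sup>\<alpha>/\<alpha>\<close>.\<close>
lemma rl_integral_holder:
  fixes \<alpha> t t' M :: real
  assumes \<alpha>: "0 < \<alpha>" "\<alpha> \<le> 1" and hc: "continuous_on {0..} h"
    and hM: "\<And>s. s \<ge> 0 \<Longrightarrow> \<bar>h s\<bar> \<le> M" and tt: "0 \<le> t" "t \<le> t'"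
  shows "\<bar>rl_integral \<alpha> h t' - rl_integral \<alpha> h t\<bar> \<le> 2 * M * (t' - t) powr \<alpha> / \<alpha>"
proof -
  define k where "k = (\<lambda>t s. (t - s) powr (\<alpha> - 1 :: real))"
  have hcI: "continuous_on {a..b} h" if "0 \<le> a" for a b
    by (rule continuous_on_subset[OF hc]) (use that in auto)
  have int: "(\<lambda>s. k u s * h s) integrable_on {a..b}" if "0 \<le> a" "a \<le> b" "b \<le> u" for a b u
    unfolding k_def using that \<alpha> by (intro integrable_powr_kernel_mult hcI) auto
  have "integral {0..t} (\<lambda>s. (k t' s - k t s) * h s)
      = integral {0..t} (\<lambda>s. k t' s * h s) - integral {0..t} (\<lambda>s. k t s * h s)"
    using integral_diff[OF int[of 0 t t'] int[of 0 t t]] tt by (simp add: left_diff_distrib)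
  then have split: "rl_integral \<alpha> h t' - rl_integral \<alpha> h t
      = integral {0..t} (\<lambda>s. (k t' s - k t s) * h s) + integral {t..t'} (\<lambda>s. k t' s * h s)"
    using Henstock_Kurzweil_Integration.integral_combine[OF tt int[of 0 t' t']] tt
    by (simp add: rl_integral_def k_def)
  have tail: "\<bar>integral {t..t'} (\<lambda>s. k t' s * h s)\<bar> \<le> M * ((t' - t) powr \<alpha> / \<alpha>)"
  proof (rule abs_integral_mult_le[OF _ int])
    show "((\<lambda>s. \<bar>k t' s\<bar>) has_integral (t' - t) powr \<alpha> / \<alpha>) {t..t'}"
      using has_integral_powr_kernel[OF \<alpha>(1) tt(2) order_refl] by (simp add: k_def)
  qed (use tt hM in auto)
  have increment: "\<bar>integral {0..t} (\<lambda>s. (k t' s - k t s) * h s)\<bar>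
      \<le> M * (t powr \<alpha> / \<alpha> - (t' powr \<alpha> - (t' - t) powr \<alpha>) / \<alpha>)"
  proof (rule abs_integral_mult_le)
    have "((\<lambda>s. k t s - k t' s) has_integral t powr \<alpha> / \<alpha> - (t' powr \<alpha> - (t' - t) powr \<alpha>) / \<alpha>) {0..t}"
      using has_integral_diff[OF has_integral_powr_kernel[OF \<alpha>(1) tt(1) order_refl]
          has_integral_powr_kernel[OF \<alpha>(1) tt]] by (simp add: k_def)
    then show "((\<lambda>s. \<bar>k t' s - k t s\<bar>) has_integral
        t powr \<alpha> / \<alpha> - (t' powr \<alpha> - (t' - t) powr \<alpha>) / \<alpha>) {0..t}"
    proof (rule has_integral_spike[rotated 2])
      fix s assume "s \<in> {0..t} - {t}"
      then have "k t' s \<le> k t s" unfolding k_def using tt \<alpha> by (intro powr_mono2') auto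
      then show "\<bar>k t' s - k t s\<bar> = k t s - k t' s" by simp
    qed simp
    show "(\<lambda>s. (k t' s - k t s) * h s) integrable_on {0..t}"
      using integrable_diff[OF int[of 0 t t'] int[of 0 t t]] tt by (simp add: left_diff_distrib)
  qed (use hM in auto)
  have "t powr \<alpha> / \<alpha> - (t' powr \<alpha> - (t' - t) powr \<alpha>) / \<alpha> \<le> (t' - t) powr \<alpha> / \<alpha>"
    using powr_mono2[of \<alpha> t t'] tt \<alpha> by (simp add: divide_right_mono diff_divide_distrib)
  then have "M * (t powr \<alpha> / \<alpha> - (t' powr \<alpha> - (t' - t) powr \<alpha>) / \<alpha>) \<le> M * ((t' - t) powr \<alpha> / \<alpha>)"
    using hM[of 0] by (intro mult_left_mono) auto
  then show ?thesis
    unfolding split using tail increment abs_triangle_ineq[of "integral {0..t} (\<lambda>s. (k t' s - k t s) * h s)"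
        "integral {t..t'} (\<lambda>s. k t' s * h s)"] by simp
qed

lemma continuous_on_rl_integral:
  fixes \<alpha> M :: real
  assumes \<alpha>: "0 < \<alpha>" "\<alpha> \<le> 1" and hc: "continuous_on {0..} h"
    and hM: "\<And>s. s \<ge> 0 \<Longrightarrow> \<bar>h s\<bar> \<le> M"
  shows "continuous_on {0..} (rl_integral \<alpha> h)"
  unfolding continuous_on_iff
proof (intro ballI allI impI)
  fix x e :: real assume x: "x \<in> {0..}" and e: "0 < e"
  have M0: "0 \<le> M" using hM[of 0] by auto
  define d where "d = (e * \<alpha> / (2 * (M + 1))) powr (1 / \<alpha>)"
  have d: "d > 0" unfolding d_def using e \<alpha> M0 by auto
  have d_powr: "d powr \<alpha> = e * \<alpha> / (2 * (M + 1))"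
    unfolding d_def using e \<alpha> M0 by (simp add: powr_powr)
  have close: "\<bar>rl_integral \<alpha> h t' - rl_integral \<alpha> h t\<bar> < e" if "0 \<le> t" "t \<le> t'" "t' - t < d" for t t'
  proof -
    have "\<bar>rl_integral \<alpha> h t' - rl_integral \<alpha> h t\<bar> \<le> 2 * M * (t' - t) powr \<alpha> / \<alpha>"
      by (rule rl_integral_holder[OF \<alpha> hc hM that(1,2)])
    also have "\<dots> \<le> 2 * (M + 1) * (t' - t) powr \<alpha> / \<alpha>"
      using \<alpha> by (intro divide_right_mono mult_right_mono) auto
    also have "\<dots> < 2 * (M + 1) * d powr \<alpha> / \<alpha>"
      using that \<alpha> M0 powr_less_mono2[of \<alpha> "t' - t" d]
      by (intro divide_strict_right_mono mult_strict_left_mono) auto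
    also have "\<dots> = e" unfolding d_powr using \<alpha> M0 by (simp add: divide_simps)
    finally show ?thesis .
  qed
  show "\<exists>d>0. \<forall>x'\<in>{0..}. dist x' x < d \<longrightarrow> dist (rl_integral \<alpha> h x') (rl_integral \<alpha> h x) < e"
  proof (intro exI[of _ d] conjI ballI impI d)
    fix x' :: real assume "x' \<in> {0..}" "dist x' x < d"
    then show "dist (rl_integral \<alpha> h x') (rl_integral \<alpha> h x) < e"
      using close[of x x'] close[of x' x] x
      by (cases "x \<le> x'") (auto simp: dist_real_def abs_minus_commute)
  qed
qed

section \<open>Solutions and the evolution mapping\<close>

lemma caputo_solutions_diff_bound:
  fixes f :: "real \<Rightarrow> 'a::euclidean_space \<Rightarrow> 'a"
  assumes \<alpha>: "0 < \<alpha>" and L: "0 \<le> L"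
    and lip: "\<And>t x y. t \<ge> 0 \<Longrightarrow> norm (f t x - f t y) \<le> L * norm (x - y)"
    and sx: "caputo_solution \<alpha> f x" and sy: "caputo_solution \<alpha> f y"
    and agree: "\<And>s. s \<in> {0..a} \<Longrightarrow> x s = y s" and at: "0 \<le> a" "a \<le> t"
    and W: "\<And>s. s \<in> {a..t} \<Longrightarrow> norm (x s - y s) \<le> W"
  shows "norm (x t - y t) \<le> L * W / Gamma \<alpha> * ((t - a) powr \<alpha> / \<alpha>)"
proof -
  define G where "G = Gamma \<alpha>"
  have G: "G > 0" unfolding G_def using \<alpha> by (simp add: Gamma_real_pos)
  define F where "F = (\<lambda>\<tau>. ((t - \<tau>) powr (\<alpha> - 1) / G) *\<^sub>R (f \<tau> (x \<tau>) - f \<tau> (y \<tau>)))"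
  have "((\<lambda>\<tau>. ((t - \<tau>) powr (\<alpha> - 1) / G) *\<^sub>R f \<tau> (x \<tau>) - ((t - \<tau>) powr (\<alpha> - 1) / G) *\<^sub>R f \<tau> (y \<tau>))
      has_integral ((x t - x 0) - (y t - y 0))) {0..t}"
    using sx sy at unfolding caputo_solution_def G_def by (intro has_integral_diff) auto
  then have F_int: "(F has_integral x t - y t) {0..t}"
    unfolding F_def using agree[of 0] at by (simp add: scaleR_right_diff_distrib)
  have "integral {0..a} F = 0"
    using agree by (intro integral_unique has_integral_is_0) (simp add: F_def)
  then have diff: "x t - y t = integral {a..t} F"
    using Henstock_Kurzweil_Integration.integral_combine[OF at, of F] F_int integral_unique[OF F_int]
    by auto
  have kernel: "((\<lambda>\<tau>. L * W / G * (t - \<tau>) powr (\<alpha> - 1)) has_integral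
      L * W / G * ((t - a) powr \<alpha> / \<alpha>)) {a..t}"
    using has_integral_powr_kernel[OF \<alpha> at(2) order_refl] by (intro has_integral_mult_right) simp
  have "norm (integral {a..t} F) \<le> integral {a..t} (\<lambda>\<tau>. L * W / G * (t - \<tau>) powr (\<alpha> - 1))"
  proof (rule integral_norm_bound_integral)
    show "F integrable_on {a..t}"
      by (rule integrable_on_subinterval[OF has_integral_integrable[OF F_int]]) (use at in auto)
    show "(\<lambda>\<tau>. L * W / G * (t - \<tau>) powr (\<alpha> - 1)) integrable_on {a..t}"
      using kernel by blast
    fix \<tau> assume \<tau>: "\<tau> \<in> {a..t}"
    have "norm (f \<tau> (x \<tau>) - f \<tau> (y \<tau>)) \<le> L * W"
      using lip[of \<tau> "x \<tau>" "y \<tau>"] mult_left_mono[OF W[OF \<tau>] L] \<tau> at by simp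
    then have "(t - \<tau>) powr (\<alpha> - 1) / G * norm (f \<tau> (x \<tau>) - f \<tau> (y \<tau>))
        \<le> (t - \<tau>) powr (\<alpha> - 1) / G * (L * W)"
      using G by (intro mult_left_mono) auto
    moreover have "norm (F \<tau>) = (t - \<tau>) powr (\<alpha> - 1) / G * norm (f \<tau> (x \<tau>) - f \<tau> (y \<tau>))"
      unfolding F_def using G by (simp del: scaleR_right_diff_distrib)
    ultimately show "norm (F \<tau>) \<le> L * W / G * (t - \<tau>) powr (\<alpha> - 1)"
      by (simp add: field_simps)
  qed
  then show ?thesis
    using diff integral_unique[OF kernel] by (simp add: G_def)
qed

text \<open>The maximum \<open>W\<close> of \<open>|x - y|\<close> on \<open>[a, a + h]\<close> is bounded by \<open>W/2\<close>, hence zero.\<close>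
lemma caputo_solutions_agree_step:
  fixes f :: "real \<Rightarrow> 'a::euclidean_space \<Rightarrow> 'a"
  assumes \<alpha>: "0 < \<alpha>" and L: "0 \<le> L"
    and lip: "\<And>t x y. t \<ge> 0 \<Longrightarrow> norm (f t x - f t y) \<le> L * norm (x - y)"
    and sx: "caputo_solution \<alpha> f x" and sy: "caputo_solution \<alpha> f y"
    and agree: "\<And>s. s \<in> {0..a} \<Longrightarrow> x s = y s" and a: "0 \<le> a"
    and h: "0 < h" "L / Gamma \<alpha> * (h powr \<alpha> / \<alpha>) \<le> 1 / 2"
  shows "\<And>s. s \<in> {0..a + h} \<Longrightarrow> x s = y s"
proof -
  have "continuous_on {0..} (\<lambda>s. norm (x s - y s))"
    using sx sy unfolding caputo_solution_def by (intro continuous_intros) auto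
  then have cont: "continuous_on {a..a + h} (\<lambda>s. norm (x s - y s))"
    by (rule continuous_on_subset) (use a in auto)
  obtain t0 where t0: "t0 \<in> {a..a + h}"
    and t0_max: "\<And>s. s \<in> {a..a + h} \<Longrightarrow> norm (x s - y s) \<le> norm (x t0 - y t0)"
    using continuous_attains_sup[OF compact_Icc _ cont] h by auto
  define W where "W = norm (x t0 - y t0)"
  have "W \<le> L * W / Gamma \<alpha> * ((t0 - a) powr \<alpha> / \<alpha>)"
    unfolding W_def using t0 t0_max a
    by (intro caputo_solutions_diff_bound[OF \<alpha> L lip sx sy agree]) auto
  also have "\<dots> \<le> L * W / Gamma \<alpha> * (h powr \<alpha> / \<alpha>)"
    using t0 \<alpha> L Gamma_real_pos[OF \<alpha>] powr_mono2[of \<alpha> "t0 - a" h]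
    by (intro mult_left_mono divide_right_mono) (auto simp: W_def)
  also have "\<dots> = W * (L / Gamma \<alpha> * (h powr \<alpha> / \<alpha>))"
    by simp
  also have "\<dots> \<le> W / 2"
    using mult_left_mono[OF h(2), of W] by (simp add: W_def)
  finally have "W = 0" by (simp add: W_def)
  then have "x s = y s" if "s \<in> {a..a + h}" for s
    using t0_max[OF that] by (simp add: W_def)
  then show "\<And>s. s \<in> {0..a + h} \<Longrightarrow> x s = y s"
    using agree by (meson atLeastAtMost_iff linorder_le_cases)
qed

lemma caputo_solution_unique:
  fixes f :: "real \<Rightarrow> 'a::euclidean_space \<Rightarrow> 'a"
  assumes \<alpha>: "0 < \<alpha>" and L: "0 < L"
    and lip: "\<And>t x y. t \<ge> 0 \<Longrightarrow> norm (f t x - f t y) \<le> L * norm (x - y)"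
    and sx: "caputo_solution \<alpha> f x" and sy: "caputo_solution \<alpha> f y"
    and x0: "x 0 = y 0" and t: "0 \<le> t"
  shows "x t = y t"
proof -
  define h where "h = (\<alpha> * Gamma \<alpha> / (2 * L)) powr (1 / \<alpha>)"
  have G: "Gamma \<alpha> > 0" using \<alpha> by (rule Gamma_real_pos)
  have h: "0 < h" "L / Gamma \<alpha> * (h powr \<alpha> / \<alpha>) \<le> 1 / 2"
    unfolding h_def using G \<alpha> L by (simp_all add: powr_powr less_imp_neq[OF G, symmetric])
  have agree: "\<forall>s\<in>{0..real n * h}. x s = y s" for n :: nat
  proof (induction n)
    case 0
    then show ?case using x0 by simp
  next
    case (Suc n)
    have "\<forall>s\<in>{0..real n * h + h}. x s = y s"
      using caputo_solutions_agree_step[OF \<alpha> less_imp_le[OF L] lip sx sy _ _ h, of "real n * h"]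
        Suc.IH h by auto
    then show ?case by (simp add: distrib_right)
  qed
  obtain n :: nat where "t / h \<le> real n" using real_arch_simple by blast
  then have "t \<in> {0..real n * h}" using h t by (simp add: divide_le_eq)
  then show ?thesis using agree[of n] by blast
qed

lemma evolution_map_solution:
  fixes f :: "real \<Rightarrow> 'a::euclidean_space \<Rightarrow> 'a"
  assumes \<alpha>: "0 < \<alpha>" and L: "0 < L"
    and lip: "\<And>t x y. t \<ge> 0 \<Longrightarrow> norm (f t x - f t y) \<le> L * norm (x - y)"
    and sx: "caputo_solution \<alpha> f x" and t: "0 \<le> t"
  shows "evolution_map \<alpha> f t (x 0) = x t"
  unfolding evolution_map_def
proof (rule the_equality)
  show "\<exists>x'. caputo_solution \<alpha> f x' \<and> x' 0 = x 0 \<and> x' t = x t" using sx by blast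
next
  fix y assume "\<exists>x'. caputo_solution \<alpha> f x' \<and> x' 0 = x 0 \<and> x' t = y"
  then show "y = x t" using caputo_solution_unique[OF \<alpha> L lip _ sx _ t] by blast
qed

lemma caputo_solution_uminus:
  assumes odd: "\<And>t y. f t (- y) = - f t y" and sx: "caputo_solution \<alpha> f x"
  shows "caputo_solution \<alpha> f (\<lambda>t. - x t)"
  unfolding caputo_solution_def
proof (intro conjI allI impI)
  show "continuous_on {0..} (\<lambda>t. - x t)"
    using sx unfolding caputo_solution_def by (intro continuous_intros) auto
  fix t :: real assume "t \<ge> 0"
  then have "((\<lambda>\<tau>. ((t - \<tau>) powr (\<alpha> - 1) / Gamma \<alpha>) *\<^sub>R f \<tau> (x \<tau>)) has_integral x t - x 0) {0..t}"
    using sx unfolding caputo_solution_def by blast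
  from has_integral_neg[OF this]
  show "((\<lambda>\<tau>. ((t - \<tau>) powr (\<alpha> - 1) / Gamma \<alpha>) *\<^sub>R f \<tau> (- x \<tau>)) has_integral - x t - - x 0) {0..t}"
    by (simp add: odd)
qed

lemma two_param_flow_inj:
  assumes "two_param_flow \<phi>" "0 \<le> s" "0 \<le> t"
  shows "inj (\<phi> s t)"
proof -
  obtain g where "homeomorphism UNIV UNIV (\<phi> s t) g"
    using assms unfolding two_param_flow_def by blast
  then show ?thesis by (metis homeomorphism_apply1 iso_tuple_UNIV_I injI)
qed

section \<open>Time profiles\<close>

definition sat :: "real \<Rightarrow> real" where "sat u = max (-1) (min 1 u)"
definition ramp :: "real \<Rightarrow> real" where "ramp s = max 0 (1 - s)"
definition bump :: "real \<Rightarrow> real" where "bump s = max 0 (min (s - 1) (3 - s))"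

lemma sat_lipschitz: "\<bar>sat a - sat b\<bar> \<le> \<bar>a - b\<bar>"
  unfolding sat_def by (simp add: max_def min_def)

lemma sat_uminus: "sat (- a) = - sat a"
  unfolding sat_def by (simp add: max_def min_def)

lemma sat_eq_1: "1 \<le> a \<Longrightarrow> sat a = 1"
  unfolding sat_def by simp

lemma continuous_on_sat [continuous_intros]:
  "continuous_on S g \<Longrightarrow> continuous_on S (\<lambda>x. sat (g x))"
  unfolding sat_def by (intro continuous_intros)

lemma continuous_on_ramp [continuous_intros]:
  "continuous_on S g \<Longrightarrow> continuous_on S (\<lambda>x. ramp (g x))"
  unfolding ramp_def by (intro continuous_intros)

lemma continuous_on_bump [continuous_intros]:
  "continuous_on S g \<Longrightarrow> continuous_on S (\<lambda>x. bump (g x))"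
  unfolding bump_def by (intro continuous_intros)

lemma ramp_nonneg: "0 \<le> ramp s" unfolding ramp_def by simp
lemma bump_nonneg: "0 \<le> bump s" unfolding bump_def by simp
lemma ramp_le_1: "0 \<le> s \<Longrightarrow> ramp s \<le> 1" unfolding ramp_def by simp
lemma bump_le_1: "bump s \<le> 1" unfolding bump_def by simp

lemma has_integral_affine:
  fixes a b p q :: real
  assumes "a \<le> b"
  shows "((\<lambda>s. p * s + q) has_integral (p * (b\<^sup>2 - a\<^sup>2) / 2 + q * (b - a))) {a..b}"
proof -
  have "((\<lambda>s. p * s + q) has_integral
      (\<lambda>s. p * s\<^sup>2 / 2 + q * s) b - (\<lambda>s. p * s\<^sup>2 / 2 + q * s) a) {a..b}"
    by (rule fundamental_theorem_of_calculus[OF assms])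
       (auto intro!: derivative_eq_intros simp flip: has_real_derivative_iff_has_vector_derivative)
  then show ?thesis by (simp add: algebra_simps diff_divide_distrib)
qed

lemma has_integral_ramp: "1 \<le> s \<Longrightarrow> (ramp has_integral 1/2) {0..s}"
proof -
  have "(ramp has_integral (-1 * (1\<^sup>2 - 0\<^sup>2) / 2 + 1 * (1 - 0))) {0..1}"
    by (rule has_integral_eq[OF _ has_integral_affine]) (auto simp: ramp_def)
  moreover have "(ramp has_integral 0) {1..s}"
    by (rule has_integral_is_0) (auto simp: ramp_def)
  ultimately show "1 \<le> s \<Longrightarrow> (ramp has_integral 1/2) {0..s}"
    using has_integral_combine[of 0 1 s ramp "1/2" 0] by simp
qed

lemma has_integral_bump: "(bump has_integral 1) {0..5}"
proof -
  have "(bump has_integral 0) {0..1}"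
    by (rule has_integral_is_0) (auto simp: bump_def)
  moreover have "(bump has_integral (1 * (2\<^sup>2 - 1\<^sup>2) / 2 + (-1) * (2 - 1))) {1..2}"
    by (rule has_integral_eq[OF _ has_integral_affine]) (auto simp: bump_def)
  moreover have "(bump has_integral ((-1) * (3\<^sup>2 - 2\<^sup>2) / 2 + 3 * (3 - 2))) {2..3}"
    by (rule has_integral_eq[OF _ has_integral_affine]) (auto simp: bump_def)
  moreover have "(bump has_integral 0) {3..5}"
    by (rule has_integral_is_0) (auto simp: bump_def)
  ultimately show ?thesis
    using has_integral_combine[of 0 1 2 bump 0 "1/2"] has_integral_combine[of 0 2 3 bump "1/2" "1/2"]
      has_integral_combine[of 0 3 5 bump 1 0] by simp
qed

lemma rl_integral_bump_eq_0: "0 \<le> t \<Longrightarrow> t \<le> 1 \<Longrightarrow> rl_integral \<alpha> bump t = 0"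
  unfolding rl_integral_def by (intro integral_unique has_integral_is_0) (auto simp: bump_def)

lemma rl_integral_bump_5:
  assumes "0 < \<alpha>" "\<alpha> \<le> 1"
  shows "4 powr (\<alpha> - 1) \<le> rl_integral \<alpha> bump 5"
proof -
  have "4 powr (\<alpha> - 1) * 1 \<le> rl_integral \<alpha> bump 5"
  proof (rule has_integral_le[OF has_integral_mult_right[OF has_integral_bump]
        has_integral_rl_integral[OF assms(1)]])
    fix s :: real assume s: "s \<in> {0..5}"
    show "4 powr (\<alpha> - 1) * bump s \<le> (5 - s) powr (\<alpha> - 1) * bump s"
    proof (cases "1 \<le> s \<and> s < 5")
      case True
      then show ?thesis using assms by (intro mult_right_mono bump_nonneg powr_mono2') auto
    next
      case False
      then show ?thesis using s by (auto simp: bump_def)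
    qed
  qed (auto intro: continuous_on_bump[OF continuous_on_id, simplified])
  then show ?thesis by simp
qed

lemma rl_integral_ramp_lower:
  assumes "0 < \<alpha>" "\<alpha> \<le> 1" "1 \<le> t" "t \<le> 3"
  shows "3 powr (\<alpha> - 1) / 2 \<le> rl_integral \<alpha> ramp t"
proof -
  have "3 powr (\<alpha> - 1) * (1/2) \<le> rl_integral \<alpha> ramp t"
  proof (rule has_integral_le[OF has_integral_mult_right[OF has_integral_ramp]
        has_integral_rl_integral[OF assms(1)]])
    fix s :: real assume s: "s \<in> {0..t}"
    show "3 powr (\<alpha> - 1) * ramp s \<le> (t - s) powr (\<alpha> - 1) * ramp s"
    proof (cases "s < t")
      case True
      then show ?thesis using assms s by (intro mult_right_mono ramp_nonneg powr_mono2') auto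
    next
      case False
      then show ?thesis using s assms by (auto simp: ramp_def)
    qed
  qed (use assms in \<open>auto intro: continuous_on_ramp[OF continuous_on_id, simplified]\<close>)
  then show ?thesis by simp
qed

lemma rl_integral_ramp_5:
  assumes "0 < \<alpha>" "\<alpha> \<le> 1"
  shows "rl_integral \<alpha> ramp 5 \<le> 4 powr (\<alpha> - 1) / 2"
proof -
  have "rl_integral \<alpha> ramp 5 \<le> 4 powr (\<alpha> - 1) * (1/2)"
  proof (rule has_integral_le[OF has_integral_rl_integral[OF assms(1)]
        has_integral_mult_right[OF has_integral_ramp]])
    fix s :: real assume s: "s \<in> {0..5}"
    show "(5 - s) powr (\<alpha> - 1) * ramp s \<le> 4 powr (\<alpha> - 1) * ramp s"
    proof (cases "s \<le> 1")
      case True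
      then show ?thesis using assms s by (intro mult_right_mono ramp_nonneg powr_mono2') auto
    next
      case False
      then show ?thesis using s by (auto simp: ramp_def)
    qed
  qed (auto intro: continuous_on_ramp[OF continuous_on_id, simplified])
  then show ?thesis by simp
qed

section \<open>The counterexample\<close>

locale nonflow_example =
  fixes \<alpha> :: real and i j :: "'d::finite"
  assumes \<alpha>_pos: "0 < \<alpha>" and \<alpha>_less_1: "\<alpha> < 1" and i_ne_j: "i \<noteq> j"
begin

lemma Gamma_pos: "0 < Gamma \<alpha>"
  using \<alpha>_pos by (rule Gamma_real_pos)

definition gain_i :: real where "gain_i = Gamma \<alpha> / 4 powr (\<alpha> - 1)"

text \<open>For \<open>\<alpha> < 1\<close> the kernel decreases strictly, so the ramp integral at times in \<open>[1,3]\<close>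
  exceeds its value at time \<open>5\<close> by at least \<open>(3\<^sup>\<alpha>\<^sup>-\<^sup>1 - 4\<^sup>\<alpha>\<^sup>-\<^sup>1)/2 > 0\<close>. This gap, which
  vanishes for \<open>\<alpha> = 1\<close>, lets the \<open>j\<close>-coordinate stay above \<open>1\<close> on \<open>[1,3]\<close> and still return
  to \<open>0\<close> at time \<open>5\<close>.\<close>
definition gain_j :: real where "gain_j = 2 * Gamma \<alpha> / (3 powr (\<alpha> - 1) - 4 powr (\<alpha> - 1))"

lemma powr_4_less_powr_3: "4 powr (\<alpha> - 1) < 3 powr (\<alpha> - 1)"
  using \<alpha>_less_1 by (intro powr_less_mono2_neg) auto

lemma gain_i_pos: "0 < gain_i"
  unfolding gain_i_def using Gamma_pos by simp

lemma gain_j_pos: "0 < gain_j"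
  unfolding gain_j_def using Gamma_pos powr_4_less_powr_3 by simp

definition field :: "real \<Rightarrow> real^'d \<Rightarrow> real^'d" where
  "field t y = (- gain_i * bump t * sat (y $ j)) *\<^sub>R axis i 1 + (gain_j * ramp t * sat (y $ i)) *\<^sub>R axis j 1"

definition trajectory :: "real \<Rightarrow> real^'d" where
  "trajectory t =
     (gain_i / Gamma \<alpha> * (rl_integral \<alpha> bump 5 - rl_integral \<alpha> bump t)) *\<^sub>R axis i 1 +
     (gain_j / Gamma \<alpha> * (rl_integral \<alpha> ramp t - rl_integral \<alpha> ramp 5)) *\<^sub>R axis j 1"

lemma trajectory_component_i:
  "trajectory t $ i = gain_i / Gamma \<alpha> * (rl_integral \<alpha> bump 5 - rl_integral \<alpha> bump t)"
  unfolding trajectory_def using i_ne_j by (simp add: axis_def)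

lemma trajectory_component_j:
  "trajectory t $ j = gain_j / Gamma \<alpha> * (rl_integral \<alpha> ramp t - rl_integral \<alpha> ramp 5)"
  unfolding trajectory_def using i_ne_j by (simp add: axis_def)

lemma trajectory_5: "trajectory 5 = 0"
  by (simp add: trajectory_def)

lemma trajectory_component_i_ge_1:
  assumes "0 \<le> t" "t \<le> 1"
  shows "1 \<le> trajectory t $ i"
proof -
  have "gain_i / Gamma \<alpha> * 4 powr (\<alpha> - 1) \<le> gain_i / Gamma \<alpha> * rl_integral \<alpha> bump 5"
    using rl_integral_bump_5 \<alpha>_pos \<alpha>_less_1 gain_i_pos Gamma_pos by (intro mult_left_mono) auto
  then show ?thesis
    unfolding trajectory_component_i rl_integral_bump_eq_0[OF assms]
    using Gamma_pos by (simp add: gain_i_def)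
qed

lemma trajectory_component_j_ge_1:
  assumes "1 \<le> t" "t \<le> 3"
  shows "1 \<le> trajectory t $ j"
proof -
  have "(3 powr (\<alpha> - 1) - 4 powr (\<alpha> - 1)) / 2 \<le> rl_integral \<alpha> ramp t - rl_integral \<alpha> ramp 5"
    using rl_integral_ramp_lower[OF \<alpha>_pos _ assms] rl_integral_ramp_5[OF \<alpha>_pos] \<alpha>_less_1
    by (simp add: diff_divide_distrib)
  then have "gain_j / Gamma \<alpha> * ((3 powr (\<alpha> - 1) - 4 powr (\<alpha> - 1)) / 2) \<le> trajectory t $ j"
    unfolding trajectory_component_j using gain_j_pos Gamma_pos by (intro mult_left_mono) auto
  moreover have "gain_j / Gamma \<alpha> * ((3 powr (\<alpha> - 1) - 4 powr (\<alpha> - 1)) / 2) = 1"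
    using Gamma_pos powr_4_less_powr_3 by (simp add: gain_j_def)
  ultimately show ?thesis by linarith
qed

text \<open>Along the trajectory both saturations are active wherever their time profile is nonzero.\<close>
lemma field_trajectory:
  assumes "0 \<le> t"
  shows "field t (trajectory t) = (- gain_i * bump t) *\<^sub>R axis i 1 + (gain_j * ramp t) *\<^sub>R axis j 1"
proof -
  have "bump t * sat (trajectory t $ j) = bump t"
  proof (cases "bump t = 0")
    case False
    then have "1 \<le> t" "t \<le> 3" by (auto simp: bump_def)
    then show ?thesis using trajectory_component_j_ge_1 sat_eq_1 by simp
  qed simp
  moreover have "ramp t * sat (trajectory t $ i) = ramp t"
  proof (cases "ramp t = 0")
    case False
    then have "t \<le> 1" by (auto simp: ramp_def)
    then show ?thesis using trajectory_component_i_ge_1 assms sat_eq_1 by simp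
  qed simp
  ultimately show ?thesis
    by (simp only: field_def mult.assoc)
qed

lemma continuous_on_trajectory: "continuous_on {0..} trajectory"
proof -
  have "continuous_on {0..} (rl_integral \<alpha> bump)" "continuous_on {0..} (rl_integral \<alpha> ramp)"
    using \<alpha>_pos \<alpha>_less_1 bump_le_1 bump_nonneg ramp_le_1 ramp_nonneg
    by (auto intro!: continuous_on_rl_integral[where M = 1] continuous_on_bump continuous_on_ramp
        continuous_on_id)
  then show ?thesis
    unfolding trajectory_def[abs_def] by (intro continuous_intros)
qed

lemma caputo_solution_trajectory: "caputo_solution \<alpha> field trajectory"
  unfolding caputo_solution_def
proof (intro conjI allI impI continuous_on_trajectory)
  fix t :: real assume t: "0 \<le> t"
  have cont: "continuous_on {0..t} bump" "continuous_on {0..t} ramp"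
    by (auto intro: continuous_on_bump[OF continuous_on_id, simplified]
        continuous_on_ramp[OF continuous_on_id, simplified])
  have forcing: "((\<lambda>s. ((- gain_i / Gamma \<alpha>) * ((t - s) powr (\<alpha> - 1) * bump s)) *\<^sub>R axis i 1 +
             ((gain_j / Gamma \<alpha>) * ((t - s) powr (\<alpha> - 1) * ramp s)) *\<^sub>R axis j 1)
      has_integral ((- gain_i / Gamma \<alpha>) * rl_integral \<alpha> bump t) *\<^sub>R axis i 1 +
             ((gain_j / Gamma \<alpha>) * rl_integral \<alpha> ramp t) *\<^sub>R axis j 1) {0..t}"
    using t cont \<alpha>_pos
    by (intro has_integral_add has_integral_scaleR_left has_integral_mult_right has_integral_rl_integral)
  have increment: "trajectory t - trajectory 0 = ((- gain_i / Gamma \<alpha>) * rl_integral \<alpha> bump t) *\<^sub>R axis i 1 +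
             ((gain_j / Gamma \<alpha>) * rl_integral \<alpha> ramp t) *\<^sub>R axis j 1"
    unfolding trajectory_def by (simp add: algebra_simps)
  show "((\<lambda>\<tau>. ((t - \<tau>) powr (\<alpha> - 1) / Gamma \<alpha>) *\<^sub>R field \<tau> (trajectory \<tau>))
      has_integral trajectory t - trajectory 0) {0..t}"
    unfolding increment
  proof (rule has_integral_eq[OF _ forcing])
    fix s assume "s \<in> {0..t}"
    then show "((- gain_i / Gamma \<alpha>) * ((t - s) powr (\<alpha> - 1) * bump s)) *\<^sub>R axis i 1 +
        ((gain_j / Gamma \<alpha>) * ((t - s) powr (\<alpha> - 1) * ramp s)) *\<^sub>R axis j 1
        = ((t - s) powr (\<alpha> - 1) / Gamma \<alpha>) *\<^sub>R field s (trajectory s)"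
      by (simp add: field_trajectory scaleR_add_right scaleR_scaleR field_simps)
  qed
qed

lemma field_uminus: "field t (- y) = - field t y"
  unfolding field_def by (simp add: sat_uminus)

lemma field_lipschitz:
  assumes "0 \<le> t"
  shows "norm (field t x - field t y) \<le> (gain_i + gain_j) * norm (x - y)"
proof -
  have "\<bar>gain_i * bump t * (sat (x $ j) - sat (y $ j))\<bar> \<le> gain_i * \<bar>(x - y) $ j\<bar>"
    using gain_i_pos bump_nonneg bump_le_1 sat_lipschitz
    by (simp add: abs_mult mult_left_le_one_le mult_mono)
  also have "\<dots> \<le> gain_i * norm (x - y)"
    using gain_i_pos component_le_norm_cart[of "x - y" j] by (intro mult_left_mono) auto
  finally have bound_i: "\<bar>gain_i * bump t * (sat (x $ j) - sat (y $ j))\<bar> \<le> gain_i * norm (x - y)" .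
  have "\<bar>gain_j * ramp t * (sat (x $ i) - sat (y $ i))\<bar> \<le> gain_j * \<bar>(x - y) $ i\<bar>"
    using gain_j_pos ramp_nonneg ramp_le_1[OF assms] sat_lipschitz
    by (simp add: abs_mult mult_left_le_one_le mult_mono)
  also have "\<dots> \<le> gain_j * norm (x - y)"
    using gain_j_pos component_le_norm_cart[of "x - y" i] by (intro mult_left_mono) auto
  finally have bound_j: "\<bar>gain_j * ramp t * (sat (x $ i) - sat (y $ i))\<bar> \<le> gain_j * norm (x - y)" .
  have "field t x - field t y = (- (gain_i * bump t * (sat (x $ j) - sat (y $ j)))) *\<^sub>R axis i 1 +
      (gain_j * ramp t * (sat (x $ i) - sat (y $ i))) *\<^sub>R axis j 1"
    unfolding field_def by (simp add: algebra_simps)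
  then have "norm (field t x - field t y) \<le> \<bar>gain_i * bump t * (sat (x $ j) - sat (y $ j))\<bar> +
      \<bar>gain_j * ramp t * (sat (x $ i) - sat (y $ i))\<bar>"
    using norm_triangle_ineq[of "(- (gain_i * bump t * (sat (x $ j) - sat (y $ j)))) *\<^sub>R axis i (1::real)"
        "(gain_j * ramp t * (sat (x $ i) - sat (y $ i))) *\<^sub>R axis j 1"]
    by simp
  then show ?thesis
    using bound_i bound_j by (simp add: distrib_right)
qed

lemma continuous_on_field: "continuous_on ({0..} \<times> UNIV) (\<lambda>(t, x). field t x)"
proof -
  have "continuous_on ({0..} \<times> UNIV) (\<lambda>p. field (fst p) (snd p))"
    unfolding field_def by (intro continuous_intros)
  then show ?thesis by (simp add: case_prod_beta')
qed

lemma evolution_map_5_trajectory_0: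
  "evolution_map \<alpha> field 5 (trajectory 0) = 0"
  "evolution_map \<alpha> field 5 (- trajectory 0) = 0"
proof -
  have L: "0 < gain_i + gain_j" using gain_i_pos gain_j_pos by simp
  have lip: "\<And>t x y. 0 \<le> t \<Longrightarrow> norm (field t x - field t y) \<le> (gain_i + gain_j) * norm (x - y)"
    by (rule field_lipschitz)
  have evolution: "evolution_map \<alpha> field 5 (x 0) = x 5" if "caputo_solution \<alpha> field x" for x
    using evolution_map_solution[of \<alpha> "gain_i + gain_j" field x 5] \<alpha>_pos L lip that by simp
  show "evolution_map \<alpha> field 5 (trajectory 0) = 0"
    using evolution[OF caputo_solution_trajectory] trajectory_5 by simp
  show "evolution_map \<alpha> field 5 (- trajectory 0) = 0"
    using evolution[OF caputo_solution_uminus[OF field_uminus caputo_solution_trajectory]] trajectory_5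
    by simp
qed

lemma trajectory_0_ne_uminus: "trajectory 0 \<noteq> - trajectory 0"
proof
  assume "trajectory 0 = - trajectory 0"
  then have "trajectory 0 $ i = - trajectory 0 $ i" by (metis vector_uminus_component)
  then show False using trajectory_component_i_ge_1[of 0] by simp
qed

end

theorem mainTheorem11:
  fixes \<alpha> :: real
  assumes "0 < \<alpha>" and "\<alpha> < 1" and "CARD('d::finite) \<ge> 2"
  shows "\<exists>f :: real \<Rightarrow> real^'d \<Rightarrow> real^'d.
           continuous_on ({0..} \<times> UNIV) (\<lambda>(t, x). f t x) \<and>
           (\<exists>L. \<forall>t\<ge>0. \<forall>x y. norm (f t x - f t y) \<le> L * norm (x - y)) \<and>
           \<not> (\<exists>\<phi>. two_param_flow \<phi> \<and> (\<forall>t\<ge>0. \<phi> 0 t = evolution_map \<alpha> f t))"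
proof -
  obtain i j :: 'd where "i \<noteq> j"
    using assms(3) card_le_Suc0_iff_eq[of "UNIV :: 'd set"] by auto
  then interpret nonflow_example \<alpha> i j
    using assms by unfold_locales
  have "\<not> (\<exists>\<phi>. two_param_flow \<phi> \<and> (\<forall>t\<ge>0. \<phi> 0 t = evolution_map \<alpha> field t))"
  proof
    assume "\<exists>\<phi>. two_param_flow \<phi> \<and> (\<forall>t\<ge>0. \<phi> 0 t = evolution_map \<alpha> field t)"
    then obtain \<phi> where flow: "two_param_flow \<phi>" and "\<phi> 0 5 = evolution_map \<alpha> field 5"
      by auto
    then have "\<phi> 0 5 (trajectory 0) = \<phi> 0 5 (- trajectory 0)"
      using evolution_map_5_trajectory_0 by simp
    then show False
      using two_param_flow_inj[OF flow, of 0 5] trajectory_0_ne_uminus by (simp add: inj_eq)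
  qed
  then show ?thesis
    using continuous_on_field field_lipschitz by blast
qed

end
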